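(* Let $H\in\mathbb{R}^{\ell\times\ell}$ be symmetric, $0\ne g_0\in\mathbb{R}^\ell$, $\gamma>0$, and consider pLGopt and pQEPmin defined in the context. (1) Let $(\lambda_*,y_* )$ be a minimizer of pLGopt. Then either $\lambda_*<\lambda_{\min}(H)$ or $\lambda_*=\lambda_{\min}(H)$, and there exists $w_*$ such that $(\lambda_*,w_* )$ is a minimizer of pQEPmin; specifically $w_*=(H-\lambda_*I)^{-1}y_*$ if $\lambda_*<\lambda_{\min}(H)$, and $w_*$ is a corresponding eigenvector of $H$ if $\lambda_*=\lambda_{\min}(H)$. (2) Conversely, if $(\lambda_*,w_* )$ is a minimizer of pQEPmin, then there exists $y_*$ such that $(\lambda_*,y_* )$ is a minimizer of pLGopt; specifically $y_*=-\frac{\gamma^2}{g_0^{\top}w_*}(H-\lambda_*I)w_*$ if $g_0^{\top}w_*\ne0$, and $y_*=x_*+\sqrt{\gamma^2-\|x_*\|^2}\,\frac{w_*}{\|w_*\|}$ if $g_0^{\top}w_*=0$, where in the latter case $x_*=-(H-\lambda_*I)^{\dagger}g_0$, and it is guaranteed that $\|x_*\|\le\gamma$.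
   Context: pLGopt: minimize $\lambda$ over pairs $(\lambda,y)\in\mathbb{R}\times\mathbb{R}^\ell$ with $(H-\lambda I)y=-g_0$ and $\|y\|=\gamma$. pQEPmin: minimize $\lambda$ over pairs $(\lambda,w)$ with $\lambda\in\mathbb{R}$, $0\ne w\in\mathbb{R}^\ell$ and $(H-\lambda I)^2w=\gamma^{-2}g_0g_0^{\top}w$. $\lambda_{\min}(H)$ is the smallest eigenvalue of $H$; $X^\dagger$ is the Moore–Penrose inverse; norms are Euclidean. *)

theory Defs
  imports "HOL-Analysis.Analysis"
begin

definition eigenvalue :: "real^'n^'n \<Rightarrow> real \<Rightarrow> bool" where
  "eigenvalue H \<mu> \<longleftrightarrow> (\<exists>v. v \<noteq> 0 \<and> H *v v = \<mu> *\<^sub>R v)"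

definition lambda_min :: "real^'n^'n \<Rightarrow> real" where
  "lambda_min H = Min {\<mu>. eigenvalue H \<mu>}"

definition pinv :: "real^'n^'n \<Rightarrow> real^'n^'n" where
  "pinv A = (THE X. A ** X ** A = A \<and> X ** A ** X = X \<and>
                    transpose (A ** X) = A ** X \<and> transpose (X ** A) = X ** A)"

definition outer :: "real^'n \<Rightarrow> real^'n \<Rightarrow> real^'n^'n" where
  "outer u v = (\<chi> i j. u $ i * v $ j)"

definition LG_feasible :: "real^'n^'n \<Rightarrow> real^'n \<Rightarrow> real \<Rightarrow> real \<Rightarrow> real^'n \<Rightarrow> bool" where
  "LG_feasible H g0 \<gamma> lam y \<longleftrightarrow> (H - lam *\<^sub>R mat 1) *v y = - g0 \<and> norm y = \<gamma>"

definition LG_minimizer :: "real^'n^'n \<Rightarrow> real^'n \<Rightarrow> real \<Rightarrow> real \<Rightarrow> real^'n \<Rightarrow> bool" where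
  "LG_minimizer H g0 \<gamma> lam y \<longleftrightarrow> LG_feasible H g0 \<gamma> lam y \<and>
     (\<forall>\<mu> z. LG_feasible H g0 \<gamma> \<mu> z \<longrightarrow> lam \<le> \<mu>)"

definition QEP_feasible :: "real^'n^'n \<Rightarrow> real^'n \<Rightarrow> real \<Rightarrow> real \<Rightarrow> real^'n \<Rightarrow> bool" where
  "QEP_feasible H g0 \<gamma> lam w \<longleftrightarrow> w \<noteq> 0 \<and>
     ((H - lam *\<^sub>R mat 1) ** (H - lam *\<^sub>R mat 1)) *v w = (inverse (\<gamma>\<^sup>2) *\<^sub>R outer g0 g0) *v w"

definition QEP_minimizer :: "real^'n^'n \<Rightarrow> real^'n \<Rightarrow> real \<Rightarrow> real \<Rightarrow> real^'n \<Rightarrow> bool" where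
  "QEP_minimizer H g0 \<gamma> lam w \<longleftrightarrow> QEP_feasible H g0 \<gamma> lam w \<and>
     (\<forall>\<mu> z. QEP_feasible H g0 \<gamma> \<mu> z \<longrightarrow> lam \<le> \<mu>)"

end

theory Submission
  imports Defs
begin

(* Both problems are governed by the shifted matrix A = H - lambda I. A solution y of
   A y = -g0, |y| = gamma yields the QEP vector w = A^-1 y when A is invertible, and a kernel
   vector of A (necessarily orthogonal to g0) otherwise. Conversely, for a QEP vector w either
   g0^T w <> 0 and -(gamma^2 / g0^T w) A w solves pLGopt, or A w = 0 and lambda is an eigenvalue
   of H. So the feasible values of lambda of the two problems differ only by eigenvalues of H, and
   their minima coincide because pLGopt already has a feasible value below lambda_min(H): the
   Lagrange multiplier of the trust-region problem min u^T H u / 2 + g0^T u on the sphere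
   |u| = gamma, which makes A positive semidefinite. In the hard case g0^T w = 0 a solution of
   pLGopt is obtained from the minimum-norm solution -A^+ g0 of A y = -g0 by adding a multiple
   of the unit kernel vector w / |w|, which is orthogonal to it. *)

section \<open>Critical points on spheres\<close>

lemma parallel_if_orthogonal_complement:
  fixes r x :: "'a::real_inner"
  assumes "x \<noteq> 0" and "\<And>w. w \<bullet> x = 0 \<Longrightarrow> r \<bullet> w = 0"
  shows "r = ((r \<bullet> x) / (x \<bullet> x)) *\<^sub>R x"
proof -
  define d where "d = r - ((r \<bullet> x) / (x \<bullet> x)) *\<^sub>R x"
  have "d \<bullet> x = 0" using assms(1) by (simp add: d_def inner_diff_left)
  then have "d \<bullet> d = r \<bullet> d" by (simp add: d_def inner_diff_left inner_commute)
  also have "\<dots> = 0" using assms(2) \<open>d \<bullet> x = 0\<close> by blast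
  finally show ?thesis by (simp add: d_def)
qed

lemma has_derivative_min_on_sphere:
  fixes f :: "'a::real_inner \<Rightarrow> real"
  assumes "x \<noteq> 0" and deriv: "(f has_derivative f') (at x)"
    and min: "\<And>y. norm y = norm x \<Longrightarrow> f x \<le> f y"
    and orth: "w \<bullet> x = 0"
  shows "f' w = 0"
proof (cases "w = 0")
  case True
  then show ?thesis using has_derivative_linear[OF deriv] linear_0 by blast
next
  case False
  define v where "v = (norm x / norm w) *\<^sub>R w"
  \<comment> \<open>the great circle through x with tangent v at x\<close>
  define c where "c t = cos t *\<^sub>R x + sin t *\<^sub>R v" for t
  have "v \<bullet> x = 0" using orth by (simp add: v_def)
  have "v \<bullet> v = x \<bullet> x"
    using False by (simp add: v_def flip: power2_norm_eq_inner)
  have on_sphere: "norm (c t) = norm x" for t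
  proof -
    have "(c t) \<bullet> (c t) = (cos t)\<^sup>2 * (x \<bullet> x) + (sin t)\<^sup>2 * (x \<bullet> x)"
      using \<open>v \<bullet> x = 0\<close> \<open>v \<bullet> v = x \<bullet> x\<close>
      by (simp add: c_def inner_add_left inner_add_right inner_commute power2_eq_square)
    also have "\<dots> = x \<bullet> x" by (simp flip: distrib_right)
    finally show ?thesis by (simp add: norm_eq_sqrt_inner)
  qed
  have "(c has_derivative (\<lambda>t. t *\<^sub>R v)) (at 0)"
    unfolding c_def by (rule derivative_eq_intros refl | simp)+
  then have "((f \<circ> c) has_derivative (f' \<circ> (\<lambda>t. t *\<^sub>R v))) (at 0)"
    using deriv by (intro diff_chain_at) (simp_all add: c_def)
  then have "((f \<circ> c) has_real_derivative f' v) (at 0)"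
    using linear_cmul[OF has_derivative_linear[OF deriv]]
    by (simp add: has_field_derivative_def o_def mult_commute_abs)
  moreover have "\<forall>t. \<bar>0 - t\<bar> < 1 \<longrightarrow> (f \<circ> c) 0 \<le> (f \<circ> c) t"
    using min on_sphere by (simp add: c_def)
  ultimately have "f' v = 0" by (intro DERIV_local_min) auto
  then show ?thesis
    using False \<open>x \<noteq> 0\<close> linear_cmul[OF has_derivative_linear[OF deriv]] by (simp add: v_def)
qed

lemma symmetric_matrix_inner:
  fixes A :: "real^'n^'n"
  assumes "transpose A = A"
  shows "x \<bullet> (A *v y) = (A *v x) \<bullet> y"
  by (metis assms dot_lmul_matrix vector_transpose_matrix)

lemma symmetric_matrixI:
  fixes A :: "real^'n^'n"
  assumes "\<And>x y. x \<bullet> (A *v y) = (A *v x) \<bullet> y"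
  shows "transpose A = A"
  by (metis assms dot_lmul_matrix matrix_eq transpose_matrix_vector vector_eq_rdot)

lemma matrix_vector_mult_shift:
  fixes H :: "real^'n^'n"
  shows "(H - l *\<^sub>R mat 1) *v x = H *v x - l *\<^sub>R x"
  by (simp add: matrix_vector_mult_diff_rdistrib flip: scaleR_matrix_vector_assoc)

lemma transpose_shift:
  fixes H :: "real^'n^'n"
  assumes "transpose H = H"
  shows "transpose (H - l *\<^sub>R mat 1) = H - l *\<^sub>R mat 1"
  using assms by (simp add: transpose_def vec_eq_iff mat_def)

lemma outer_matrix_vector_mult: "outer u v *v w = (v \<bullet> w) *\<^sub>R u"
  by (simp add: outer_def matrix_vector_mult_def vec_eq_iff inner_vec_def sum_distrib_left
      mult.commute mult.left_commute)

lemma matrix_vector_mult_uminus: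
  fixes A :: "real^'n^'n"
  shows "A *v (- x) = - (A *v x)"
  by (simp add: matrix_vector_mult_def vec_eq_iff sum_negf)

lemma symmetric_square_kernel:
  fixes A :: "real^'n^'n"
  assumes "transpose A = A" and "(A ** A) *v z = 0"
  shows "A *v z = 0"
proof -
  have "(A *v z) \<bullet> (A *v z) = z \<bullet> (A *v (A *v z))"
    using symmetric_matrix_inner[OF assms(1)] by metis
  also have "\<dots> = 0" using assms(2) by (simp add: matrix_vector_mul_assoc)
  finally show ?thesis by simp
qed

section \<open>The smallest eigenvalue\<close>

lemma quadratic_form_has_derivative:
  fixes A :: "real^'n^'n"
  assumes "transpose A = A"
  shows "((\<lambda>u. u \<bullet> (A *v u)) has_derivative (\<lambda>h. 2 * ((A *v x) \<bullet> h))) (at x)"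
proof -
  have "((*v) A has_derivative (*v) A) (at x)"
    by (rule bounded_linear_imp_has_derivative[OF matrix_vector_mul_bounded_linear])
  then have "((\<lambda>u. u \<bullet> (A *v u)) has_derivative (\<lambda>h. x \<bullet> (A *v h) + h \<bullet> (A *v x))) (at x)"
    by (rule has_derivative_inner[OF has_derivative_ident])
  then show ?thesis
    using symmetric_matrix_inner[OF assms, of x] by (simp add: inner_commute)
qed

lemma eigenvalue_iff_shift_kernel:
  "eigenvalue H \<mu> \<longleftrightarrow> (\<exists>z. z \<noteq> 0 \<and> (H - \<mu> *\<^sub>R mat 1) *v z = 0)"
  by (simp add: eigenvalue_def matrix_vector_mult_shift)

lemma symmetric_eigenvalue_exists:
  fixes H :: "real^'n^'n"
  assumes sym: "transpose H = H"
  shows "\<exists>\<mu>. eigenvalue H \<mu>"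
proof -
  define f where "f u = u \<bullet> (H *v u)" for u :: "real^'n"
  have "continuous_on (sphere 0 1) f"
    unfolding f_def by (intro continuous_intros linear_continuous_on matrix_vector_mul_bounded_linear)
  moreover have "sphere (0::real^'n) 1 \<noteq> {}" by simp
  ultimately obtain v where v: "v \<in> sphere 0 1" and min: "\<And>y. y \<in> sphere 0 1 \<Longrightarrow> f v \<le> f y"
    using continuous_attains_inf[OF compact_sphere] by metis
  have "v \<noteq> 0" using v by auto
  have "(H *v v) \<bullet> w = 0" if "w \<bullet> v = 0" for w
    using has_derivative_min_on_sphere[OF \<open>v \<noteq> 0\<close> quadratic_form_has_derivative[OF sym] _ that] min v
    unfolding f_def by simp
  then have "H *v v = ((H *v v) \<bullet> v / (v \<bullet> v)) *\<^sub>R v"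
    by (rule parallel_if_orthogonal_complement[OF \<open>v \<noteq> 0\<close>])
  then show ?thesis using \<open>v \<noteq> 0\<close> unfolding eigenvalue_def by blast
qed

lemma symmetric_eigenvalues_finite:
  fixes H :: "real^'n^'n"
  assumes sym: "transpose H = H"
  shows "finite {\<mu>. eigenvalue H \<mu>}"
proof -
  define S where "S = {\<mu>. eigenvalue H \<mu>}"
  define ev where "ev \<mu> = (SOME v. v \<noteq> 0 \<and> H *v v = \<mu> *\<^sub>R v)" for \<mu>
  have ev: "ev \<mu> \<noteq> 0 \<and> H *v ev \<mu> = \<mu> *\<^sub>R ev \<mu>" if "\<mu> \<in> S" for \<mu>
    using someI_ex[of "\<lambda>v. v \<noteq> 0 \<and> H *v v = \<mu> *\<^sub>R v"] that
    unfolding S_def eigenvalue_def ev_def by blast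
  have "inj_on ev S"
  proof (rule inj_onI)
    fix \<mu> \<nu> assume "\<mu> \<in> S" "\<nu> \<in> S" "ev \<mu> = ev \<nu>"
    then have "\<mu> *\<^sub>R ev \<mu> = \<nu> *\<^sub>R ev \<mu>" using ev by metis
    then show "\<mu> = \<nu>" using ev \<open>\<mu> \<in> S\<close> by simp
  qed
  have "ev \<mu> \<bullet> ev \<nu> = 0" if "\<mu> \<in> S" "\<nu> \<in> S" "\<mu> \<noteq> \<nu>" for \<mu> \<nu>
  proof -
    have "\<mu> * (ev \<mu> \<bullet> ev \<nu>) = ev \<mu> \<bullet> (H *v ev \<nu>)"
      using ev[OF that(1)] symmetric_matrix_inner[OF sym, of "ev \<mu>" "ev \<nu>"] by simp
    also have "\<dots> = \<nu> * (ev \<mu> \<bullet> ev \<nu>)" using ev[OF that(2)] by simp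
    finally show ?thesis using that(3) by simp
  qed
  then have "pairwise orthogonal (ev ` S)"
    using \<open>inj_on ev S\<close> unfolding pairwise_def orthogonal_def inj_on_def by blast
  moreover have "0 \<notin> ev ` S" using ev by force
  ultimately have "finite (ev ` S)"
    using pairwise_orthogonal_independent independent_imp_finite by blast
  then show ?thesis using \<open>inj_on ev S\<close> finite_imageD S_def by blast
qed

lemma
  fixes H :: "real^'n^'n"
  assumes "transpose H = H"
  shows eigenvalue_lambda_min: "eigenvalue H (lambda_min H)"
    and lambda_min_le_eigenvalue: "eigenvalue H \<mu> \<Longrightarrow> lambda_min H \<le> \<mu>"
proof -
  have "finite {\<mu>. eigenvalue H \<mu>}" "{\<mu>. eigenvalue H \<mu>} \<noteq> {}"
    using symmetric_eigenvalues_finite[OF assms] symmetric_eigenvalue_exists[OF assms] by auto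
  then show "eigenvalue H (lambda_min H)" "eigenvalue H \<mu> \<Longrightarrow> lambda_min H \<le> \<mu>"
    unfolding lambda_min_def using Min_in Min_le by auto
qed

lemma eigenvalue_ge_if_shift_psd:
  fixes H :: "real^'n^'n"
  assumes psd: "\<And>u. 0 \<le> u \<bullet> ((H - l *\<^sub>R mat 1) *v u)" and "eigenvalue H \<mu>"
  shows "l \<le> \<mu>"
proof -
  obtain u where "u \<noteq> 0" "H *v u = \<mu> *\<^sub>R u" using \<open>eigenvalue H \<mu>\<close> unfolding eigenvalue_def by blast
  then have "0 \<le> (\<mu> - l) * (u \<bullet> u)"
    using psd[of u, unfolded matrix_vector_mult_shift] by (simp add: inner_diff_right algebra_simps)
  moreover have "0 < u \<bullet> u" using \<open>u \<noteq> 0\<close> by simp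
  ultimately show ?thesis by (simp add: zero_le_mult_iff)
qed

section \<open>The trust-region subproblem\<close>

definition trust_region_objective :: "real^'n^'n \<Rightarrow> real^'n \<Rightarrow> real^'n \<Rightarrow> real" where
  "trust_region_objective H g u = u \<bullet> (H *v u) / 2 + g \<bullet> u"

lemma trust_region_objective_gap:
  fixes H :: "real^'n^'n"
  assumes sym: "transpose H = H" and x: "(H - l *\<^sub>R mat 1) *v x = - g" and "norm y = norm x"
  shows "trust_region_objective H g y - trust_region_objective H g x
           = (y - x) \<bullet> ((H - l *\<^sub>R mat 1) *v (y - x)) / 2"
proof -
  define A where "A = H - l *\<^sub>R mat 1"
  have H: "H *v u = A *v u + l *\<^sub>R u" for u by (simp add: A_def matrix_vector_mult_shift)
  have g: "g = - (A *v x)" using x by (simp add: A_def)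
  have "y \<bullet> y = x \<bullet> x" using \<open>norm y = norm x\<close> by (simp flip: power2_norm_eq_inner)
  moreover have "x \<bullet> (A *v y) = (A *v x) \<bullet> y"
    using symmetric_matrix_inner[OF transpose_shift[OF sym]] by (simp add: A_def)
  ultimately show ?thesis
    unfolding trust_region_objective_def A_def[symmetric] H g
    by (simp add: matrix_vector_mult_diff_distrib inner_add_right inner_diff_left inner_diff_right
        inner_commute field_simps)
qed

lemma trust_region_min_shift_psd:
  fixes H :: "real^'n^'n"
  assumes sym: "transpose H = H" and "x \<noteq> 0" and x: "(H - l *\<^sub>R mat 1) *v x = - g"
    and min: "\<And>y. norm y = norm x \<Longrightarrow> trust_region_objective H g x \<le> trust_region_objective H g y"
  shows "0 \<le> d \<bullet> ((H - l *\<^sub>R mat 1) *v d)"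
proof -
  define Q where "Q d = d \<bullet> ((H - l *\<^sub>R mat 1) *v d)" for d
  have transversal: "0 \<le> Q d" if "d \<bullet> x \<noteq> 0" for d
  proof -
    \<comment> \<open>x + s d is the reflection of x in the hyperplane orthogonal to d\<close>
    define s where "s = - 2 * (d \<bullet> x) / (d \<bullet> d)"
    have "d \<noteq> 0" using that by auto
    then have "s \<noteq> 0" "s * (d \<bullet> d) = - 2 * (d \<bullet> x)" using that by (auto simp: s_def)
    then have "(x + s *\<^sub>R d) \<bullet> (x + s *\<^sub>R d) = x \<bullet> x"
      by (simp add: inner_add_left inner_add_right inner_commute algebra_simps)
    then have "norm (x + s *\<^sub>R d) = norm x" by (simp add: norm_eq_sqrt_inner)
    from min[OF this] trust_region_objective_gap[OF sym x this]
    have "0 \<le> s\<^sup>2 * Q d" by (simp add: Q_def matrix_vector_mult_scaleR power2_eq_square)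
    then show ?thesis using \<open>s \<noteq> 0\<close> by (simp add: zero_le_mult_iff)
  qed
  show ?thesis
  proof (cases "d \<bullet> x = 0")
    case True
    \<comment> \<open>d is the limit of the transversal directions d + c x as c tends to 0\<close>
    have "isCont (\<lambda>c. Q (d + c *\<^sub>R x)) 0"
      unfolding Q_def
      by (intro continuous_intros bounded_linear.continuous[OF matrix_vector_mul_bounded_linear])
    then have "((\<lambda>c. Q (d + c *\<^sub>R x)) \<longlongrightarrow> Q d) (at 0)" by (simp add: isCont_def)
    moreover have "\<forall>\<^sub>F c in at 0. 0 \<le> Q (d + c *\<^sub>R x)"
      unfolding eventually_at_filter
      using True \<open>x \<noteq> 0\<close> by (intro always_eventually) (auto intro: transversal simp: inner_add_left)
    ultimately show ?thesis unfolding Q_def by (rule tendsto_lowerbound) simp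
  qed (use transversal Q_def in auto)
qed

lemma trust_region_multiplier_exists:
  fixes H :: "real^'n^'n"
  assumes sym: "transpose H = H" and "\<gamma> > 0"
  shows "\<exists>l x. LG_feasible H g \<gamma> l x \<and> (\<forall>d. 0 \<le> d \<bullet> ((H - l *\<^sub>R mat 1) *v d))"
proof -
  let ?q = "trust_region_objective H g"
  have "continuous_on (sphere 0 \<gamma>) ?q"
    unfolding trust_region_objective_def
    by (intro continuous_intros linear_continuous_on matrix_vector_mul_bounded_linear) auto
  moreover have "sphere (0::real^'n) \<gamma> \<noteq> {}" using \<open>\<gamma> > 0\<close> by simp
  ultimately obtain x where x: "x \<in> sphere 0 \<gamma>" and min: "\<And>y. y \<in> sphere 0 \<gamma> \<Longrightarrow> ?q x \<le> ?q y"
    using continuous_attains_inf[OF compact_sphere] by metis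
  have "norm x = \<gamma>" "x \<noteq> 0" using x \<open>\<gamma> > 0\<close> by auto
  have deriv: "(?q has_derivative (\<lambda>h. 2 * ((H *v x) \<bullet> h) / 2 + g \<bullet> h)) (at x)"
    unfolding trust_region_objective_def
    by (intro has_derivative_add has_derivative_inner_right has_derivative_ident
        bounded_linear.has_derivative[OF bounded_linear_divide quadratic_form_has_derivative[OF sym]])
  have "(H *v x + g) \<bullet> w = 0" if "w \<bullet> x = 0" for w
    using has_derivative_min_on_sphere[OF \<open>x \<noteq> 0\<close> deriv _ that] min \<open>norm x = \<gamma>\<close>
    by (simp add: inner_add_left)
  then obtain l where "H *v x + g = l *\<^sub>R x"
    using parallel_if_orthogonal_complement[OF \<open>x \<noteq> 0\<close>] by blast
  then have shift: "(H - l *\<^sub>R mat 1) *v x = - g"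
    unfolding matrix_vector_mult_shift by (simp add: algebra_simps)
  then have "LG_feasible H g \<gamma> l x" using \<open>norm x = \<gamma>\<close> by (simp add: LG_feasible_def)
  moreover have "0 \<le> d \<bullet> ((H - l *\<^sub>R mat 1) *v d)" for d
    using trust_region_min_shift_psd[OF sym \<open>x \<noteq> 0\<close> shift] min \<open>norm x = \<gamma>\<close> by simp
  ultimately show ?thesis by blast
qed

section \<open>The Moore-Penrose inverse\<close>

lemma orthogonal_projection_matrix_exists:
  fixes S :: "(real^'n) set"
  assumes "subspace S"
  obtains P :: "real^'n^'n"
  where "transpose P = P" and "\<And>y. P *v y \<in> S" and "\<And>z. z \<in> S \<Longrightarrow> P *v z = z"
proof -
  obtain B where "pairwise orthogonal B" "span B = S"
    using orthogonal_basis_subspace[OF assms] by metis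
  define f where "f y = (\<Sum>b\<in>B. (b \<bullet> y / (b \<bullet> b)) *\<^sub>R b)" for y :: "real^'n"
  have "linear f"
    by (rule linearI)
      (simp_all add: f_def inner_add_right add_divide_distrib scaleR_add_left sum.distrib
        scaleR_sum_right)
  then have P: "matrix f *v y = f y" for y by (simp add: matrix_works)
  have "transpose (matrix f) = matrix f"
    by (rule symmetric_matrixI)
      (simp add: P f_def inner_sum_left inner_sum_right inner_commute mult.commute)
  moreover have "matrix f *v y \<in> S" for y
    using \<open>span B = S\<close> by (auto simp: P f_def intro: span_sum span_mul span_base)
  moreover have "matrix f *v z = z" if "z \<in> S" for z
  proof -
    have "z - f z \<in> span B"
      using \<open>span B = S\<close> \<open>subspace S\<close> that \<open>\<And>y. matrix f *v y \<in> S\<close>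
      by (simp add: P subspace_diff)
    then have "orthogonal (z - f z) (z - f z)"
      using Gram_Schmidt_step[OF \<open>pairwise orthogonal B\<close>] by (simp add: f_def)
    then show ?thesis by (simp add: P orthogonal_self)
  qed
  ultimately show ?thesis using that by blast
qed

definition penrose_inverse :: "real^'n^'n \<Rightarrow> real^'n^'n \<Rightarrow> bool" where
  "penrose_inverse A X \<longleftrightarrow> A ** X ** A = A \<and> X ** A ** X = X \<and>
     transpose (A ** X) = A ** X \<and> transpose (X ** A) = X ** A"

lemma pinv_eq_The_penrose_inverse: "pinv A = (THE X. penrose_inverse A X)"
  by (simp add: pinv_def penrose_inverse_def)

lemma penrose_inverse_unique:
  assumes "penrose_inverse A X" and "penrose_inverse A Y"
  shows "X = Y"
proof -
  have X1: "A ** X ** A = A" and X2: "X ** A ** X = X"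
    and X3: "transpose (A ** X) = A ** X" and X4: "transpose (X ** A) = X ** A"
    and Y1: "A ** Y ** A = A" and Y3: "transpose (A ** Y) = A ** Y"
    and Y2: "Y ** A ** Y = Y" and Y4: "transpose (Y ** A) = Y ** A"
    using assms unfolding penrose_inverse_def by auto
  have "A ** X = transpose ((A ** Y) ** (A ** X))"
    using X3 Y1 by (simp add: matrix_mul_assoc)
  also have "\<dots> = (A ** X) ** (A ** Y)" by (simp only: matrix_transpose_mul[of "A ** Y"] X3 Y3)
  also have "\<dots> = A ** Y" using X1 by (simp add: matrix_mul_assoc)
  finally have AX: "A ** X = A ** Y" .
  have "X ** A = transpose ((X ** A) ** (Y ** A))"
    using X4 Y1 by (simp add: matrix_mul_assoc[symmetric])
  also have "\<dots> = (Y ** A) ** (X ** A)" by (simp only: matrix_transpose_mul[of "X ** A"] X4 Y4)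
  also have "\<dots> = Y ** A" using X1 by (simp add: matrix_mul_assoc[symmetric])
  finally have XA: "X ** A = Y ** A" .
  have "X = (X ** A) ** X" using X2 by simp
  also have "\<dots> = Y ** (A ** Y)" using AX XA by (metis matrix_mul_assoc)
  also have "\<dots> = Y" using Y2 by (simp add: matrix_mul_assoc)
  finally show ?thesis .
qed

lemma kernel_projection_matrix_exists:
  fixes A :: "real^'n^'n"
  assumes symA: "transpose A = A"
  obtains K :: "real^'n^'n"
  where "transpose K = K" and "\<And>y. A *v (K *v y) = 0" and "\<And>y. K *v (A *v y) = 0"
    and "\<And>z. A *v z = 0 \<Longrightarrow> K *v z = z"
proof -
  have kernel: "subspace {z. A *v z = 0}"
    by (simp add: subspace_def matrix_vector_right_distrib matrix_vector_mult_scaleR)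
  obtain K where symK: "transpose K = K" and range: "\<And>y. K *v y \<in> {z. A *v z = 0}"
    and Kid: "\<And>z. z \<in> {z. A *v z = 0} \<Longrightarrow> K *v z = z"
    using orthogonal_projection_matrix_exists[OF kernel] by auto
  have AK: "A *v (K *v y) = 0" for y using range by simp
  have "K *v (A *v y) = 0" for y
  proof -
    have "(K *v (A *v y)) \<bullet> z = y \<bullet> (A *v (K *v z))" for z
      using symmetric_matrix_inner[OF symK, of "A *v y" z] symmetric_matrix_inner[OF symA, of y "K *v z"]
      by simp
    then have "(K *v (A *v y)) \<bullet> (K *v (A *v y)) = 0" by (simp add: AK)
    then show ?thesis by simp
  qed
  with that symK AK Kid show ?thesis by simp
qed

lemma symmetric_penrose_inverse_exists:
  fixes A :: "real^'n^'n"
  assumes symA: "transpose A = A"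
  shows "\<exists>X. penrose_inverse A X"
proof -
  obtain K where symK: "transpose K = K" and AK: "\<And>y. A *v (K *v y) = 0"
    and KA: "\<And>y. K *v (A *v y) = 0" and Kid: "\<And>z. A *v z = 0 \<Longrightarrow> K *v z = z"
    using kernel_projection_matrix_exists[OF symA] by blast
  have KK: "K *v (K *v y) = K *v y" for y using AK Kid by simp
  \<comment> \<open>A + K is invertible, and (A + K)\<inverse> - K is the Moore-Penrose inverse of A\<close>
  define M where "M = A + K"
  have Mv: "M *v y = A *v y + K *v y" for y by (simp add: M_def matrix_vector_mult_add_rdistrib)
  have "z = 0" if "M *v z = 0" for z
  proof -
    have "K *v z = 0"
      using arg_cong[OF that[unfolded Mv], of "(*v) K"] KA KK by (simp add: matrix_vector_right_distrib)
    then show ?thesis using that Kid[of z] by (simp add: Mv)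
  qed
  then obtain Mi where "Mi ** M = mat 1" using matrix_left_invertible_ker[of M] by blast
  then have "M ** Mi = mat 1" by (simp add: matrix_left_right_inverse)
  have Mi_M: "Mi *v (M *v y) = y" and M_Mi: "M *v (Mi *v y) = y" for y
    using \<open>Mi ** M = mat 1\<close> \<open>M ** Mi = mat 1\<close> by (simp_all add: matrix_vector_mul_assoc)
  have K_Mi: "K *v (Mi *v y) = K *v y" for y
    using arg_cong[OF M_Mi[of y, unfolded Mv], of "(*v) K"] KA KK
    by (simp add: matrix_vector_right_distrib)
  have Mi_K: "Mi *v (K *v y) = K *v y" for y
    using Mi_M[of "K *v y"] by (simp add: Mv AK KK)
  define X where "X = Mi - K"
  have Xv: "X *v y = Mi *v y - K *v y" for y by (simp add: X_def matrix_vector_mult_diff_rdistrib)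
  have AX: "A *v (X *v y) = y - K *v y" for y
    using M_Mi[of y] K_Mi[of y] by (simp add: Xv Mv AK matrix_vector_mult_diff_distrib algebra_simps)
  have XA: "X *v (A *v y) = y - K *v y" for y
    using Mi_M[of y] Mi_K[of y] by (simp add: Xv Mv KA matrix_vector_right_distrib algebra_simps)
  have KX: "K *v (X *v y) = 0" for y
    by (simp add: Xv K_Mi KK matrix_vector_mult_diff_distrib)
  have "A ** X = mat 1 - K" "X ** A = mat 1 - K"
    by (simp_all add: matrix_eq AX XA matrix_vector_mult_diff_rdistrib flip: matrix_vector_mul_assoc)
  moreover have "transpose (mat 1 - K) = mat 1 - K"
  proof (rule symmetric_matrixI)
    show "y \<bullet> ((mat 1 - K) *v z) = ((mat 1 - K) *v y) \<bullet> z" for y z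
      using symmetric_matrix_inner[OF symK, of y z]
      by (simp add: matrix_vector_mult_diff_rdistrib inner_diff_left inner_diff_right inner_commute)
  qed
  moreover have "A ** X ** A = A"
    by (simp add: matrix_eq AX KA flip: matrix_vector_mul_assoc)
  moreover have "X ** A ** X = X"
    by (simp add: matrix_eq XA KX flip: matrix_vector_mul_assoc)
  ultimately show ?thesis unfolding penrose_inverse_def by metis
qed

lemma pinv_penrose_inverse:
  fixes A :: "real^'n^'n"
  assumes "transpose A = A"
  shows "penrose_inverse A (pinv A)"
proof -
  have "\<exists>!X. penrose_inverse A X"
    using symmetric_penrose_inverse_exists[OF assms] penrose_inverse_unique by blast
  then show ?thesis unfolding pinv_eq_The_penrose_inverse by (rule theI')
qed

lemma symmetric_idempotent_norm_le:
  fixes Q :: "real^'n^'n"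
  assumes symQ: "transpose Q = Q" and idem: "Q ** Q = Q"
  shows "norm (Q *v x) \<le> norm x"
proof -
  have "(Q *v x) \<bullet> (x - Q *v x) = 0"
    using symmetric_matrix_inner[OF symQ, of x "x - Q *v x"] idem
    by (simp add: matrix_vector_mult_diff_distrib matrix_vector_mul_assoc)
  then have "x \<bullet> x = (Q *v x) \<bullet> (Q *v x) + (x - Q *v x) \<bullet> (x - Q *v x)"
    by (simp add: inner_diff_left inner_diff_right inner_commute)
  then have "(Q *v x) \<bullet> (Q *v x) \<le> x \<bullet> x" by simp
  then show ?thesis by (simp add: norm_eq_sqrt_inner)
qed

lemma pinv_least_norm_solution:
  fixes A :: "real^'n^'n"
  assumes symA: "transpose A = A" and "A *v x = b"
  shows "A *v (pinv A *v b) = b" and "norm (pinv A *v b) \<le> norm x"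
proof -
  have APA: "A ** pinv A ** A = A" and PA: "transpose (pinv A ** A) = pinv A ** A"
    using pinv_penrose_inverse[OF symA] unfolding penrose_inverse_def by auto
  have b: "pinv A *v b = (pinv A ** A) *v x" using \<open>A *v x = b\<close> by (simp flip: matrix_vector_mul_assoc)
  show "A *v (pinv A *v b) = b"
    using APA \<open>A *v x = b\<close> by (simp add: b matrix_vector_mul_assoc matrix_mul_assoc)
  have "(pinv A ** A) ** (pinv A ** A) = pinv A ** A"
    using APA by (metis matrix_mul_assoc)
  then show "norm (pinv A *v b) \<le> norm x" using symmetric_idempotent_norm_le[OF PA] by (simp add: b)
qed

lemma pinv_orthogonal_kernel:
  fixes A :: "real^'n^'n"
  assumes symA: "transpose A = A" and "A *v u = 0"
  shows "(pinv A *v b) \<bullet> u = 0"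
proof -
  have PAP: "pinv A ** A ** pinv A = pinv A" and PA: "transpose (pinv A ** A) = pinv A ** A"
    using pinv_penrose_inverse[OF symA] unfolding penrose_inverse_def by auto
  have "(pinv A *v b) \<bullet> u = ((pinv A ** A) *v (pinv A *v b)) \<bullet> u"
    using PAP by (simp add: matrix_vector_mul_assoc)
  also have "\<dots> = (pinv A *v b) \<bullet> (pinv A *v (A *v u))"
    using symmetric_matrix_inner[OF PA] by (simp add: matrix_vector_mul_assoc)
  finally show ?thesis using \<open>A *v u = 0\<close> by simp
qed

lemma norm_add_orthogonal_to_sphere:
  fixes x u :: "'a::real_inner"
  assumes "x \<bullet> u = 0" and "norm u = 1" and "norm x \<le> \<gamma>"
  shows "norm (x + sqrt (\<gamma>\<^sup>2 - (norm x)\<^sup>2) *\<^sub>R u) = \<gamma>"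
proof -
  define s where "s = sqrt (\<gamma>\<^sup>2 - (norm x)\<^sup>2)"
  have "0 \<le> \<gamma>" using assms(3) norm_ge_zero order_trans by blast
  have "(norm x)\<^sup>2 \<le> \<gamma>\<^sup>2" using assms(3) by (simp add: power_mono)
  then have "s\<^sup>2 = \<gamma>\<^sup>2 - (norm x)\<^sup>2" by (simp add: s_def)
  have "u \<bullet> u = 1" using assms(2) by (simp add: norm_eq_sqrt_inner)
  then have "(norm (x + s *\<^sub>R u))\<^sup>2 = (norm x)\<^sup>2 + s\<^sup>2"
    unfolding power2_norm_eq_inner using assms(1)
    by (simp add: inner_add_left inner_add_right inner_commute power2_eq_square)
  also have "\<dots> = \<gamma>\<^sup>2" using \<open>s\<^sup>2 = \<gamma>\<^sup>2 - (norm x)\<^sup>2\<close> by simp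
  finally show ?thesis using \<open>0 \<le> \<gamma>\<close> by (simp add: s_def power2_eq_iff_nonneg)
qed

lemma QEP_feasible_iff:
  "QEP_feasible H g \<gamma> \<mu> w \<longleftrightarrow> w \<noteq> 0 \<and>
     (H - \<mu> *\<^sub>R mat 1) *v ((H - \<mu> *\<^sub>R mat 1) *v w) = (inverse (\<gamma>\<^sup>2) * (g \<bullet> w)) *\<^sub>R g"
  by (simp add: QEP_feasible_def matrix_vector_mul_assoc outer_matrix_vector_mult
      flip: scaleR_matrix_vector_assoc)

lemma LG_feasible_orthogonal_kernel:
  fixes H :: "real^'n^'n"
  assumes sym: "transpose H = H" and "LG_feasible H g \<gamma> \<mu> y" and "(H - \<mu> *\<^sub>R mat 1) *v z = 0"
  shows "g \<bullet> z = 0"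
proof -
  have "g \<bullet> z = - (((H - \<mu> *\<^sub>R mat 1) *v y) \<bullet> z)"
    using \<open>LG_feasible H g \<gamma> \<mu> y\<close> by (simp add: LG_feasible_def)
  also have "\<dots> = - (y \<bullet> ((H - \<mu> *\<^sub>R mat 1) *v z))"
    by (simp add: symmetric_matrix_inner[OF transpose_shift[OF sym]])
  finally show ?thesis using assms(3) by simp
qed

lemma QEP_feasible_of_kernel:
  assumes "z \<noteq> 0" and "(H - \<mu> *\<^sub>R mat 1) *v z = 0" and "g \<bullet> z = 0"
  shows "QEP_feasible H g \<gamma> \<mu> z"
  using assms by (simp add: QEP_feasible_iff)

lemma QEP_feasible_matrix_inv:
  fixes H :: "real^'n^'n"
  assumes sym: "transpose H = H" and "\<gamma> > 0" and LG: "LG_feasible H g \<gamma> \<mu> y"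
    and inv: "invertible (H - \<mu> *\<^sub>R mat 1)"
  shows "QEP_feasible H g \<gamma> \<mu> (matrix_inv (H - \<mu> *\<^sub>R mat 1) *v y)"
proof -
  define A where "A = H - \<mu> *\<^sub>R mat 1"
  define w where "w = matrix_inv A *v y"
  have "A ** matrix_inv A = mat 1"
    using inv someI_ex[of "\<lambda>A'. A ** A' = mat 1 \<and> A' ** A = mat 1"]
    unfolding invertible_def matrix_inv_def A_def by blast
  then have Aw: "A *v w = y" by (simp add: w_def matrix_vector_mul_assoc)
  have Ay: "A *v y = - g" and "norm y = \<gamma>" using LG by (auto simp: LG_feasible_def A_def)
  then have "y \<noteq> 0" using \<open>\<gamma> > 0\<close> by auto
  have "g \<bullet> w = - (y \<bullet> (A *v w))"
    using Ay symmetric_matrix_inner[OF transpose_shift[OF sym, of \<mu>], of y w] by (simp add: A_def)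
  also have "\<dots> = - \<gamma>\<^sup>2" using Aw \<open>norm y = \<gamma>\<close> by (simp flip: power2_norm_eq_inner)
  finally have "g \<bullet> w = - \<gamma>\<^sup>2" .
  then show ?thesis
    using Aw Ay \<open>y \<noteq> 0\<close> \<open>\<gamma> > 0\<close> by (auto simp: QEP_feasible_iff A_def[symmetric] w_def[symmetric])
qed

lemma QEP_feasible_if_LG_feasible:
  fixes H :: "real^'n^'n"
  assumes sym: "transpose H = H" and "\<gamma> > 0" and LG: "LG_feasible H g \<gamma> \<mu> y"
  shows "\<exists>w. QEP_feasible H g \<gamma> \<mu> w"
proof (cases "\<exists>z. z \<noteq> 0 \<and> (H - \<mu> *\<^sub>R mat 1) *v z = 0")
  case True
  then show ?thesis
    using QEP_feasible_of_kernel LG_feasible_orthogonal_kernel[OF sym LG] by blast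
next
  case False
  then have "invertible (H - \<mu> *\<^sub>R mat 1)"
    using matrix_left_invertible_ker invertible_left_inverse by blast
  then show ?thesis using QEP_feasible_matrix_inv[OF sym \<open>\<gamma> > 0\<close> LG] by blast
qed

lemma QEP_feasible_orthogonal_imp_kernel:
  fixes H :: "real^'n^'n"
  assumes sym: "transpose H = H" and "QEP_feasible H g \<gamma> \<mu> w" and "g \<bullet> w = 0"
  shows "(H - \<mu> *\<^sub>R mat 1) *v w = 0"
  using assms symmetric_square_kernel[OF transpose_shift[OF sym]]
  by (simp add: QEP_feasible_iff matrix_vector_mul_assoc)

lemma LG_feasible_if_QEP_feasible:
  fixes H :: "real^'n^'n"
  assumes sym: "transpose H = H" and "\<gamma> > 0" and "QEP_feasible H g \<gamma> \<mu> w" and "g \<bullet> w \<noteq> 0"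
  shows "LG_feasible H g \<gamma> \<mu> (- (\<gamma>\<^sup>2 / (g \<bullet> w)) *\<^sub>R ((H - \<mu> *\<^sub>R mat 1) *v w))"
proof -
  define A where "A = H - \<mu> *\<^sub>R mat 1"
  define y where "y = - (\<gamma>\<^sup>2 / (g \<bullet> w)) *\<^sub>R (A *v w)"
  have AAw: "A *v (A *v w) = (inverse (\<gamma>\<^sup>2) * (g \<bullet> w)) *\<^sub>R g"
    using \<open>QEP_feasible H g \<gamma> \<mu> w\<close> by (simp add: QEP_feasible_iff A_def)
  then have "A *v y = - g"
    using \<open>g \<bullet> w \<noteq> 0\<close> \<open>\<gamma> > 0\<close> by (simp add: y_def matrix_vector_mult_scaleR matrix_vector_mult_uminus)
  have "(A *v w) \<bullet> (A *v w) = w \<bullet> (A *v (A *v w))"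
    using symmetric_matrix_inner[OF transpose_shift[OF sym, of \<mu>], of w "A *v w"] by (simp add: A_def)
  then have "y \<bullet> y = \<gamma>\<^sup>2"
    using \<open>g \<bullet> w \<noteq> 0\<close> \<open>\<gamma> > 0\<close>
    by (simp add: y_def AAw inner_commute power2_eq_square field_simps)
  then have "norm y = \<gamma>" using \<open>\<gamma> > 0\<close> by (simp add: norm_eq_sqrt_inner)
  with \<open>A *v y = - g\<close> show ?thesis by (simp add: LG_feasible_def A_def y_def)
qed

lemma LG_feasible_pinv_completion:
  fixes H :: "real^'n^'n"
  assumes sym: "transpose H = H" and LG: "LG_feasible H g \<gamma> \<mu> x"
    and "(H - \<mu> *\<^sub>R mat 1) *v w = 0" and "w \<noteq> 0"
  shows "let xs = - (pinv (H - \<mu> *\<^sub>R mat 1) *v g) in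
           norm xs \<le> \<gamma> \<and>
           LG_feasible H g \<gamma> \<mu> (xs + sqrt (\<gamma>\<^sup>2 - (norm xs)\<^sup>2) *\<^sub>R (inverse (norm w) *\<^sub>R w))"
proof -
  define A where "A = H - \<mu> *\<^sub>R mat 1"
  define xs where "xs = - (pinv A *v g)"
  define u where "u = inverse (norm w) *\<^sub>R w"
  have symA: "transpose A = A" using transpose_shift[OF sym] by (simp add: A_def)
  have "A *v x = - g" and "norm x = \<gamma>" using LG by (auto simp: LG_feasible_def A_def)
  have xs: "xs = pinv A *v (- g)" by (simp add: xs_def matrix_vector_mult_uminus)
  have "A *v xs = - g" "norm xs \<le> \<gamma>"
    using pinv_least_norm_solution[OF symA \<open>A *v x = - g\<close>] \<open>norm x = \<gamma>\<close> by (simp_all add: xs)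
  have "A *v u = 0" "norm u = 1"
    using \<open>(H - \<mu> *\<^sub>R mat 1) *v w = 0\<close> \<open>w \<noteq> 0\<close> by (simp_all add: u_def A_def matrix_vector_mult_scaleR)
  then have "xs \<bullet> u = 0" using pinv_orthogonal_kernel[OF symA] by (simp add: xs)
  define y where "y = xs + sqrt (\<gamma>\<^sup>2 - (norm xs)\<^sup>2) *\<^sub>R u"
  have "A *v y = - g"
    using \<open>A *v xs = - g\<close> \<open>A *v u = 0\<close> by (simp add: y_def matrix_vector_right_distrib matrix_vector_mult_scaleR)
  moreover have "norm y = \<gamma>"
    using norm_add_orthogonal_to_sphere[OF \<open>xs \<bullet> u = 0\<close> \<open>norm u = 1\<close> \<open>norm xs \<le> \<gamma>\<close>] by (simp add: y_def)
  ultimately show ?thesis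
    using \<open>norm xs \<le> \<gamma>\<close> by (simp add: Let_def LG_feasible_def A_def[symmetric] xs_def[symmetric] u_def[symmetric] y_def[symmetric])
qed

lemma LG_feasible_le_lambda_min_exists:
  fixes H :: "real^'n^'n"
  assumes sym: "transpose H = H" and "\<gamma> > 0"
  shows "\<exists>l x. LG_feasible H g \<gamma> l x \<and> l \<le> lambda_min H"
  using trust_region_multiplier_exists[OF assms] eigenvalue_ge_if_shift_psd
    eigenvalue_lambda_min[OF sym] by blast

lemma LG_minimizer_le_lambda_min:
  fixes H :: "real^'n^'n"
  assumes "transpose H = H" and "\<gamma> > 0" and "LG_minimizer H g \<gamma> lam y"
  shows "lam \<le> lambda_min H"
  using LG_feasible_le_lambda_min_exists[OF assms(1,2)] assms(3)
  unfolding LG_minimizer_def by force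

lemma LG_minimizer_le_QEP_feasible:
  fixes H :: "real^'n^'n"
  assumes sym: "transpose H = H" and "\<gamma> > 0" and min: "LG_minimizer H g \<gamma> lam y"
    and QEP: "QEP_feasible H g \<gamma> \<mu> w"
  shows "lam \<le> \<mu>"
proof (cases "g \<bullet> w = 0")
  case True
  then have "eigenvalue H \<mu>"
    using QEP_feasible_orthogonal_imp_kernel[OF sym QEP] QEP
    by (auto simp: eigenvalue_iff_shift_kernel QEP_feasible_def)
  then show ?thesis
    using LG_minimizer_le_lambda_min[OF sym \<open>\<gamma> > 0\<close> min] lambda_min_le_eigenvalue[OF sym] by force
next
  case False
  then show ?thesis
    using LG_feasible_if_QEP_feasible[OF sym \<open>\<gamma> > 0\<close> QEP] min unfolding LG_minimizer_def by blast
qed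

lemma QEP_minimizer_le_LG_feasible:
  fixes H :: "real^'n^'n"
  assumes "transpose H = H" and "\<gamma> > 0" and "QEP_minimizer H g \<gamma> lam w"
    and "LG_feasible H g \<gamma> \<mu> y"
  shows "lam \<le> \<mu>"
  using QEP_feasible_if_LG_feasible[OF assms(1,2,4)] assms(3) by (auto simp: QEP_minimizer_def)

lemma LG_minimizer_imp_QEP_minimizer:
  fixes H :: "real^'n^'n"
  assumes sym: "transpose H = H" and "\<gamma> > 0" and min: "LG_minimizer H g \<gamma> lam y"
  shows "(lam < lambda_min H \<or> lam = lambda_min H) \<and>
         (\<exists>w. QEP_minimizer H g \<gamma> lam w) \<and>
         (lam < lambda_min H \<longrightarrow>
            QEP_minimizer H g \<gamma> lam (matrix_inv (H - lam *\<^sub>R mat 1) *v y)) \<and>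
         (lam = lambda_min H \<longrightarrow>
            (\<exists>w. w \<noteq> 0 \<and> H *v w = lam *\<^sub>R w \<and> QEP_minimizer H g \<gamma> lam w))"
proof -
  have LG: "LG_feasible H g \<gamma> lam y" using min by (simp add: LG_minimizer_def)
  have QEP_min: "QEP_minimizer H g \<gamma> lam w \<longleftrightarrow> QEP_feasible H g \<gamma> lam w" for w
    using LG_minimizer_le_QEP_feasible[OF sym \<open>\<gamma> > 0\<close> min] by (auto simp: QEP_minimizer_def)
  have regular: "QEP_minimizer H g \<gamma> lam (matrix_inv (H - lam *\<^sub>R mat 1) *v y)"
    if "lam < lambda_min H"
  proof -
    have "\<not> eigenvalue H lam" using that lambda_min_le_eigenvalue[OF sym] by force
    then have "invertible (H - lam *\<^sub>R mat 1)"
      using matrix_left_invertible_ker invertible_left_inverse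
      by (metis eigenvalue_iff_shift_kernel)
    then show ?thesis using QEP_feasible_matrix_inv[OF sym \<open>\<gamma> > 0\<close> LG] QEP_min by blast
  qed
  have hard: "\<exists>w. w \<noteq> 0 \<and> H *v w = lam *\<^sub>R w \<and> QEP_minimizer H g \<gamma> lam w"
    if hard_case: "lam = lambda_min H"
  proof -
    obtain w where "w \<noteq> 0" "H *v w = lam *\<^sub>R w"
      using eigenvalue_lambda_min[OF sym] by (auto simp: eigenvalue_def hard_case)
    moreover from this have "(H - lam *\<^sub>R mat 1) *v w = 0" by (simp add: matrix_vector_mult_shift)
    ultimately show ?thesis
      using QEP_feasible_of_kernel LG_feasible_orthogonal_kernel[OF sym LG] QEP_min by blast
  qed
  show ?thesis
    using LG_minimizer_le_lambda_min[OF sym \<open>\<gamma> > 0\<close> min] regular hard by force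
qed

lemma QEP_minimizer_imp_LG_minimizer:
  fixes H :: "real^'n^'n"
  assumes sym: "transpose H = H" and "\<gamma> > 0" and min: "QEP_minimizer H g \<gamma> lam w"
  shows "(\<exists>y. LG_minimizer H g \<gamma> lam y) \<and>
         (g \<bullet> w \<noteq> 0 \<longrightarrow>
            LG_minimizer H g \<gamma> lam (- (\<gamma>\<^sup>2 / (g \<bullet> w)) *\<^sub>R ((H - lam *\<^sub>R mat 1) *v w))) \<and>
         (g \<bullet> w = 0 \<longrightarrow>
            (let xs = - (pinv (H - lam *\<^sub>R mat 1) *v g) in
               norm xs \<le> \<gamma> \<and>
               LG_minimizer H g \<gamma> lam
                 (xs + sqrt (\<gamma>\<^sup>2 - (norm xs)\<^sup>2) *\<^sub>R (inverse (norm w) *\<^sub>R w))))"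
proof -
  have QEP: "QEP_feasible H g \<gamma> lam w" using min by (simp add: QEP_minimizer_def)
  have LG_min: "LG_minimizer H g \<gamma> lam y \<longleftrightarrow> LG_feasible H g \<gamma> lam y" for y
    using QEP_minimizer_le_LG_feasible[OF sym \<open>\<gamma> > 0\<close> min] by (auto simp: LG_minimizer_def)
  have orthogonal: "let xs = - (pinv (H - lam *\<^sub>R mat 1) *v g) in
      norm xs \<le> \<gamma> \<and>
      LG_minimizer H g \<gamma> lam (xs + sqrt (\<gamma>\<^sup>2 - (norm xs)\<^sup>2) *\<^sub>R (inverse (norm w) *\<^sub>R w))"
    if "g \<bullet> w = 0"
  proof -
    have kernel: "(H - lam *\<^sub>R mat 1) *v w = 0"
      by (rule QEP_feasible_orthogonal_imp_kernel[OF sym QEP that])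
    obtain l x where LG: "LG_feasible H g \<gamma> l x" and "l \<le> lambda_min H"
      using LG_feasible_le_lambda_min_exists[OF sym \<open>\<gamma> > 0\<close>] by blast
    moreover have "lambda_min H \<le> lam"
      using kernel QEP lambda_min_le_eigenvalue[OF sym]
      by (auto simp: eigenvalue_iff_shift_kernel QEP_feasible_def)
    moreover have "lam \<le> l" by (rule QEP_minimizer_le_LG_feasible[OF sym \<open>\<gamma> > 0\<close> min LG])
    ultimately have "lam = l" by linarith
    with LG have "LG_feasible H g \<gamma> lam x" by simp
    then show ?thesis
      using LG_feasible_pinv_completion[OF sym _ kernel] QEP by (simp add: LG_min QEP_feasible_def Let_def)
  qed
  show ?thesis
    using LG_feasible_if_QEP_feasible[OF sym \<open>\<gamma> > 0\<close> QEP] orthogonal LG_min by (auto simp: Let_def)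
qed

theorem theorem2p5:
  fixes H :: "real^'n^'n" and g0 :: "real^'n" and \<gamma> :: real
  assumes symH: "transpose H = H"
    and g0: "g0 \<noteq> 0"
    and gam: "\<gamma> > 0"
  shows
    "(\<forall>lam_s ys. LG_minimizer H g0 \<gamma> lam_s ys \<longrightarrow>
        (lam_s < lambda_min H \<or> lam_s = lambda_min H) \<and>
        (\<exists>ws. QEP_minimizer H g0 \<gamma> lam_s ws) \<and>
        (lam_s < lambda_min H \<longrightarrow>
           QEP_minimizer H g0 \<gamma> lam_s (matrix_inv (H - lam_s *\<^sub>R mat 1) *v ys)) \<and>
        (lam_s = lambda_min H \<longrightarrow>
           (\<exists>ws. ws \<noteq> 0 \<and> H *v ws = lam_s *\<^sub>R ws \<and> QEP_minimizer H g0 \<gamma> lam_s ws)))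
   \<and>
    (\<forall>lam_s ws. QEP_minimizer H g0 \<gamma> lam_s ws \<longrightarrow>
        (\<exists>ys. LG_minimizer H g0 \<gamma> lam_s ys) \<and>
        (g0 \<bullet> ws \<noteq> 0 \<longrightarrow>
           LG_minimizer H g0 \<gamma> lam_s (- (\<gamma>\<^sup>2 / (g0 \<bullet> ws)) *\<^sub>R ((H - lam_s *\<^sub>R mat 1) *v ws))) \<and>
        (g0 \<bullet> ws = 0 \<longrightarrow>
           (let xs = - (pinv (H - lam_s *\<^sub>R mat 1) *v g0) in
              norm xs \<le> \<gamma> \<and>
              LG_minimizer H g0 \<gamma> lam_s
                (xs + sqrt (\<gamma>\<^sup>2 - (norm xs)\<^sup>2) *\<^sub>R (inverse (norm ws) *\<^sub>R ws)))))"
  using LG_minimizer_imp_QEP_minimizer[OF symH gam] QEP_minimizer_imp_LG_minimizer[OF symH gam]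
  by blast

end
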